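(* If $c$ is real with $0\le c\le 1/4$, then $r_{\mathrm{bif}}(c)=1/4-c$.
   Context: $f_c(z)=z^2+c$, extended to $\widehat{\mathbb{C}}$ by $f_c(\infty)=\infty$. For $c\in\mathbb{C}$, $r\ge0$, $G_{c,r}$ is the semigroup under composition generated by $\{f_{c'}:|c'-c|\le r\}$. A minimal set of a polynomial semigroup $G$ is a minimal element, with respect to inclusion, of the family of non-empty compact $L\subset\widehat{\mathbb{C}}$ with $g(L)\subset L$ for all $g\in G$; it is planar if $\infty\notin L$. The bifurcation radius $r_{\mathrm{bif}}(c)$ is the supremum of those $r\ge0$ for which $G_{c,r}$ has a planar minimal set (equivalently the infimum of those $r\ge0$ for which $G_{c,r}$ has no planar minimal set); by prior work this value is attained and $G_{c,r}$ has a planar minimal set iff $r\le r_{\mathrm{bif}}(c)$. *)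

theory Defs
  imports "HOL-Analysis.Analysis"
begin

definition fc :: "complex \<Rightarrow> complex \<Rightarrow> complex" where
  "fc c z = z^2 + c"

text \<open>G_{c,r}: the semigroup under composition generated by f_{c'} with |c' - c| \<le> r,
  as maps restricted to the plane (each f_{c'} maps the plane to itself).\<close>
inductive_set Gsemi :: "complex \<Rightarrow> real \<Rightarrow> (complex \<Rightarrow> complex) set"
  for c :: complex and r :: real where
  gen: "cmod (c' - c) \<le> r \<Longrightarrow> fc c' \<in> Gsemi c r"
| comp: "g \<in> Gsemi c r \<Longrightarrow> h \<in> Gsemi c r \<Longrightarrow> g \<circ> h \<in> Gsemi c r"

definition forward_invariant :: "(complex \<Rightarrow> complex) set \<Rightarrow> complex set \<Rightarrow> bool" where
  "forward_invariant G L \<longleftrightarrow> (\<forall>g\<in>G. g ` L \<subseteq> L)"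

text \<open>A planar minimal set: a minimal set not containing infinity. Every subset of a
  planar set is planar, and a subset of the plane is compact in the Riemann sphere iff
  it is compact in the plane, so minimality can be tested among planar compact sets.\<close>
definition planar_minimal_set :: "(complex \<Rightarrow> complex) set \<Rightarrow> complex set \<Rightarrow> bool" where
  "planar_minimal_set G L \<longleftrightarrow>
     L \<noteq> {} \<and> compact L \<and> forward_invariant G L \<and>
     (\<forall>K. K \<noteq> {} \<and> compact K \<and> forward_invariant G K \<and> K \<subseteq> L \<longrightarrow> K = L)"

definition r_bif :: "complex \<Rightarrow> real" where
  "r_bif c = Sup {r. r \<ge> 0 \<and> (\<exists>L. planar_minimal_set (Gsemi c r) L)}"

end

theory Submission
  imports Defs
begin

(* For r <= 1/4 - c the disk |z| <= 1/2 is forward invariant, and Zorn's lemma (a chain of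
   nonempty compact invariant sets has a nonempty compact invariant intersection) gives a minimal
   set inside it. For r > 1/4 - c there is no nonempty compact invariant set L. First, L has no
   real point, since real orbits of x^2 + (c + r) with c + r > 1/4 escape. Next, L misses the disk
   |z| <= 1/2: the superlevel sets of Re (1/(1/2 - z)) are the disks internally tangent to
   |z| = 1/2 at 1/2; squaring moves the boundary circle of such a disk by at most 1/4 - c < r, so
   at a maximum point of this function on L a perturbation of the parameter lands strictly inside
   the disk, contradicting maximality. Finally, away from |z| <= 1/2 we have |2p| >= 1 + 2R, so the
   square of the ball of radius R around p covers the ball of radius R around p^2; hence a ball of
   radius R in L yields one of radius R + r, and L would contain arbitrarily large balls. *)

lemma cball_Int_cball_nonempty:
  fixes x y :: "'a::real_normed_vector"
  assumes "dist x y \<le> r + s" "0 \<le> r" "0 \<le> s"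
  shows "cball x r \<inter> cball y s \<noteq> {}"
proof (cases "r + s = 0")
  case True
  then have "r = 0" "s = 0" "x = y"
    using assms by auto
  then show ?thesis by simp
next
  case False
  then have rs: "r + s > 0" using assms by linarith
  define z where "z = y + (s / (r + s)) *\<^sub>R (x - y)"
  have "x - z = (1 - s / (r + s)) *\<^sub>R (x - y)"
    by (simp add: z_def algebra_simps)
  also have "1 - s / (r + s) = r / (r + s)"
    using rs by (simp add: field_simps)
  finally have "dist x z = r / (r + s) * dist x y"
    using assms by (simp add: dist_norm)
  also have "\<dots> \<le> r / (r + s) * (r + s)"
    using assms rs by (intro mult_left_mono) auto
  also have "\<dots> = r"
    using rs by simp
  finally have xz: "dist x z \<le> r" .
  have "dist y z = s / (r + s) * dist x y"
    using assms by (simp add: z_def dist_norm)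
  also have "\<dots> \<le> s / (r + s) * (r + s)"
    using assms rs by (intro mult_left_mono) auto
  also have "\<dots> = s"
    using rs by simp
  finally have "dist y z \<le> s" .
  with xz show ?thesis by auto
qed

lemma cball_Int_ball_nonempty:
  fixes x y :: "'a::real_normed_vector"
  assumes "dist x y < r + s" "0 \<le> r" "0 < s"
  shows "cball x r \<inter> ball y s \<noteq> {}"
proof -
  define s' where "s' = max 0 (dist x y - r)"
  have "cball x r \<inter> cball y s' \<noteq> {}"
    using assms by (intro cball_Int_cball_nonempty) (auto simp: s'_def)
  moreover have "cball y s' \<subseteq> ball y s"
    using assms by (auto simp: s'_def)
  ultimately show ?thesis by blast
qed

lemma dist_tangent_disk_iff_Re_inverse:
  fixes b w :: complex
  assumes "w \<noteq> b" "0 \<le> \<rho>"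
  shows "dist w (b - of_real \<rho>) \<le> \<rho> \<longleftrightarrow> 1 \<le> 2 * \<rho> * Re (inverse (b - w))"
    and "dist w (b - of_real \<rho>) < \<rho> \<longleftrightarrow> 1 < 2 * \<rho> * Re (inverse (b - w))"
proof -
  define a where "a = b - w"
  define t where "t = 2 * \<rho> * Re (inverse a)"
  have q: "(cmod a)^2 > 0" using assms by (simp add: a_def)
  have R: "Re a = (cmod a)^2 * Re (inverse a)"
  proof -
    have "Re (inverse a) = Re a / (cmod a)^2"
      by (simp add: cmod_power2)
    then show ?thesis
      using q by (simp del: inverse_complex.sel)
  qed
  have D: "dist w (b - of_real \<rho>) = cmod (a - of_real \<rho>)"
    by (simp add: a_def dist_norm norm_minus_commute algebra_simps)
  have "(dist w (b - of_real \<rho>))^2 - \<rho>^2 = (cmod a)^2 - 2 * \<rho> * Re a"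
    unfolding D cmod_power2 by (simp add: power2_eq_square algebra_simps)
  also have "\<dots> = (cmod a)^2 * (1 - t)"
    unfolding R t_def by (simp add: algebra_simps del: inverse_complex.sel)
  finally have E: "(dist w (b - of_real \<rho>))^2 - \<rho>^2 = (cmod a)^2 * (1 - t)" .
  have "dist w (b - of_real \<rho>) \<le> \<rho> \<longleftrightarrow> (cmod a)^2 * (1 - t) \<le> 0"
    using assms(2) by (simp add: power2_le_iff_abs_le flip: E)
  also have "\<dots> \<longleftrightarrow> 1 \<le> t"
    using q by (simp add: mult_le_0_iff)
  finally show "dist w (b - of_real \<rho>) \<le> \<rho> \<longleftrightarrow> 1 \<le> 2 * \<rho> * Re (inverse (b - w))"
    by (simp add: t_def a_def)
  have "dist w (b - of_real \<rho>) < \<rho> \<longleftrightarrow> \<not> \<rho>^2 \<le> (dist w (b - of_real \<rho>))^2"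
    using assms(2) by (simp add: not_le)
  also have "\<dots> \<longleftrightarrow> (cmod a)^2 * (1 - t) < 0"
    by (simp add: not_le flip: E)
  also have "\<dots> \<longleftrightarrow> 1 < t"
    using q by (simp add: mult_less_0_iff)
  finally show "dist w (b - of_real \<rho>) < \<rho> \<longleftrightarrow> 1 < 2 * \<rho> * Re (inverse (b - w))"
    by (simp add: t_def a_def)
qed

lemma square_sphere_subset_cball:
  assumes "0 \<le> \<rho>" "\<rho> \<le> 1/2"
  shows "(\<lambda>z::complex. z^2) ` sphere (of_real (1/2 - \<rho>)) \<rho> \<subseteq> cball (of_real (1/4 - \<rho>)) \<rho>"
proof (rule image_subsetI)
  fix z :: complex assume "z \<in> sphere (of_real (1/2 - \<rho>)) \<rho>"
  define v where "v = z - of_real (1/2 - \<rho>)"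
  have v: "cmod v = \<rho>" using \<open>z \<in> _\<close> by (simp add: v_def dist_norm norm_minus_commute)
  have "of_real (\<rho>^2) = v * cnj v"
    using v complex_norm_square[of v] by simp
  then have vv: "v * v + of_real (\<rho>^2) = v * of_real (2 * Re v)"
    by (simp add: distrib_left[symmetric] complex_add_cnj)
  have "z^2 - of_real (1/4 - \<rho>) = v * v + of_real (\<rho>^2) + v * of_real (1 - 2 * \<rho>)"
    by (simp add: v_def power2_eq_square algebra_simps)
  also have "\<dots> = v * of_real (2 * Re v + 1 - 2 * \<rho>)"
    unfolding vv by (simp add: algebra_simps)
  finally have "cmod (z^2 - of_real (1/4 - \<rho>)) = \<rho> * \<bar>2 * Re v + 1 - 2 * \<rho>\<bar>"
    by (simp only: norm_mult norm_of_real v)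
  also have "\<dots> \<le> \<rho> * 1"
    using abs_Re_le_cmod[of v] v assms by (intro mult_left_mono) auto
  finally show "z^2 \<in> cball (of_real (1/4 - \<rho>)) \<rho>"
    by (simp add: dist_norm norm_minus_commute)
qed

lemma cball_square_subset:
  fixes p :: complex
  assumes "0 \<le> \<rho>"
  shows "cball (p^2) (\<rho> * (2 * cmod p - \<rho>)) \<subseteq> (\<lambda>z. z^2) ` cball p \<rho>"
proof
  fix q assume "q \<in> cball (p^2) (\<rho> * (2 * cmod p - \<rho>))"
  then have q: "cmod (q - p^2) \<le> \<rho> * (2 * cmod p - \<rho>)"
    by (simp add: dist_norm norm_minus_commute)
  define h1 where "h1 = csqrt q - p"
  define h2 where "h2 = - csqrt q - p"
  have "\<exists>h\<in>{h1, h2}. cmod h \<le> \<rho>"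
  proof (rule ccontr)
    assume "\<not> ?thesis"
    then have "cmod h1 > \<rho>" "cmod h2 > \<rho>" by auto
    then have "0 < (cmod h1 - \<rho>) * (cmod h2 - \<rho>)" by simp
    moreover have "2 * cmod p \<le> cmod h1 + cmod h2"
      using norm_triangle_ineq[of h1 h2] by (simp add: h1_def h2_def norm_mult)
    then have "\<rho> * (2 * cmod p) \<le> \<rho> * (cmod h1 + cmod h2)"
      using assms by (rule mult_left_mono)
    moreover have "h1 * h2 = p^2 - (csqrt q)^2"
      by (simp add: h1_def h2_def power2_eq_square algebra_simps)
    then have "cmod h1 * cmod h2 = cmod (q - p^2)"
      by (simp add: norm_minus_commute flip: norm_mult)
    ultimately show False
      using q by (simp add: algebra_simps)
  qed
  moreover have "(p + h1)^2 = q" "(p + h2)^2 = q"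
    by (simp_all add: h1_def h2_def)
  ultimately obtain h where "cmod h \<le> \<rho>" "q = (p + h)^2"
    by auto
  then show "q \<in> (\<lambda>z. z^2) ` cball p \<rho>"
    by (auto simp: dist_norm)
qed

lemma real_quadratic_iterate_ge:
  fixes a x :: real
  shows "((\<lambda>t. t^2 + a) ^^ n) x \<ge> x + real n * (a - 1/4)"
proof (induction n)
  case (Suc n)
  have "t \<le> t^2 + 1/4" for t :: real
    using sum_squares_ge_zero[of "t - 1/2" 0] by (simp add: power2_eq_square algebra_simps)
  moreover have "x + real (Suc n) * (a - 1/4) = x + real n * (a - 1/4) + (a - 1/4)"
    by (simp add: algebra_simps)
  ultimately show ?case
    using Suc by (smt (verit) comp_apply funpow.simps(2))
qed simp

lemma perturbed_square_enters_tangent_disk: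
  fixes c r \<rho> :: real
  assumes "c \<le> 1/4" "1/4 - c < r" "0 < \<rho>" "\<rho> \<le> 1/2" "z \<in> sphere (of_real (1/2 - \<rho>)) \<rho>"
  obtains c' where "cmod (c' - of_real c) \<le> r" "dist (z^2 + c') (of_real (1/2 - \<rho>)) < \<rho>"
proof -
  have "z^2 \<in> cball (of_real (1/4 - \<rho>)) \<rho>"
    using square_sphere_subset_cball[OF less_imp_le[OF assms(3)] assms(4)] assms(5) by blast
  then have near: "cmod (z^2 - of_real (1/4 - \<rho>)) \<le> \<rho>"
    by (simp add: dist_norm norm_minus_commute)
  have "dist (z^2 + of_real c) (of_real (1/2 - \<rho>)) = cmod ((z^2 - of_real (1/4 - \<rho>)) - of_real (1/4 - c))"
    unfolding dist_norm by (rule arg_cong[where f = cmod]) simp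
  also have "\<dots> \<le> cmod (z^2 - of_real (1/4 - \<rho>)) + cmod (of_real (1/4 - c) :: complex)"
    by (rule norm_triangle_ineq4)
  also have "\<dots> \<le> \<rho> + (1/4 - c)"
    using near assms(1) by (simp only: norm_of_real)
  finally have "dist (z^2 + of_real c) (of_real (1/2 - \<rho>)) < r + \<rho>"
    using assms(2) by linarith
  moreover have "0 \<le> r"
    using assms(1,2) by linarith
  ultimately have "cball (z^2 + of_real c) r \<inter> ball (of_real (1/2 - \<rho>)) \<rho> \<noteq> {}"
    using cball_Int_ball_nonempty assms(3) by blast
  then obtain w where w: "dist (z^2 + of_real c) w \<le> r" "dist w (of_real (1/2 - \<rho>)) < \<rho>"
    by (auto simp: dist_commute)
  show thesis
  proof (rule that[of "w - z^2"])
    show "cmod (w - z^2 - of_real c) \<le> r"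
      using w(1) by (simp add: dist_norm norm_minus_commute algebra_simps)
    show "dist (z^2 + (w - z^2)) (of_real (1/2 - \<rho>)) < \<rho>"
      using w(2) by simp
  qed
qed

lemma forward_invariant_Gsemi_iff:
  "forward_invariant (Gsemi c r) L \<longleftrightarrow> (\<forall>z\<in>L. \<forall>c'. cmod (c' - c) \<le> r \<longrightarrow> z^2 + c' \<in> L)"
proof
  assume "forward_invariant (Gsemi c r) L"
  then show "\<forall>z\<in>L. \<forall>c'. cmod (c' - c) \<le> r \<longrightarrow> z^2 + c' \<in> L"
    by (fastforce simp: forward_invariant_def fc_def dest: Gsemi.gen)
next
  assume gen: "\<forall>z\<in>L. \<forall>c'. cmod (c' - c) \<le> r \<longrightarrow> z^2 + c' \<in> L"
  have "g ` L \<subseteq> L" if "g \<in> Gsemi c r" for g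
    using that by induction (use gen in \<open>auto simp: fc_def\<close>)
  then show "forward_invariant (Gsemi c r) L"
    by (simp add: forward_invariant_def)
qed

lemma planar_minimal_set_exists:
  assumes "L0 \<noteq> {}" "compact L0" "forward_invariant G L0"
  shows "\<exists>L. planar_minimal_set G L"
proof -
  define A where "A = {K. K \<noteq> {} \<and> compact K \<and> forward_invariant G K \<and> K \<subseteq> L0}"
  have "\<exists>M\<in>A. \<forall>K\<in>A. K \<subseteq> M \<longrightarrow> K = M"
  proof (rule predicate_Zorn)
    show "partial_order_on A (relation_of (\<lambda>M K. K \<subseteq> M) A)"
      by (rule partial_order_on_relation_ofI) auto
  next
    fix C assume C: "C \<in> Chains (relation_of (\<lambda>M K. K \<subseteq> M) A)"
    then have CA: "C \<subseteq> A" and chain: "\<And>S T. S \<in> C \<and> T \<in> C \<Longrightarrow> S \<subseteq> T \<or> T \<subseteq> S"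
      by (auto simp: Chains_def relation_of_def)
    show "\<exists>U\<in>A. \<forall>K\<in>C. U \<subseteq> K"
    proof (cases "C = {}")
      case True
      then show ?thesis using assms by (auto simp: A_def)
    next
      case False
      have "\<Inter>C \<noteq> {}"
        using CA chain by (intro compact_chain) (auto simp: A_def)
      moreover have "compact (\<Inter>C)"
        using CA False by (intro compact_Inter) (auto simp: A_def)
      moreover have "forward_invariant G (\<Inter>C)"
        using CA unfolding A_def forward_invariant_def by blast
      ultimately have "\<Inter>C \<in> A"
        using CA False by (auto simp: A_def)
      then show ?thesis by blast
    qed
  qed
  then obtain M where "M \<in> A" "\<And>K. K \<in> A \<Longrightarrow> K \<subseteq> M \<Longrightarrow> K = M"
    by blast
  then have "planar_minimal_set G M"
    by (auto simp: planar_minimal_set_def A_def)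
  then show ?thesis ..
qed

lemma cball_half_forward_invariant:
  fixes c :: complex
  assumes "cmod c + r \<le> 1/4"
  shows "forward_invariant (Gsemi c r) (cball 0 (1/2))"
  unfolding forward_invariant_Gsemi_iff
proof (intro ballI allI impI)
  fix z c' :: complex assume z: "z \<in> cball 0 (1/2)" and c': "cmod (c' - c) \<le> r"
  have "cmod z \<le> 1/2"
    using z by simp
  then have "cmod (z^2) \<le> 1/2 * (1/2)"
    unfolding power2_eq_square norm_mult by (intro mult_mono) auto
  moreover have "cmod c' \<le> cmod c + r"
    using c' norm_triangle_sub[of c' c] by (simp add: algebra_simps)
  ultimately have "cmod (z^2 + c') \<le> 1/2"
    using assms norm_triangle_ineq[of "z^2" c'] by linarith
  then show "z^2 + c' \<in> cball 0 (1/2)" by simp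
qed

lemma bounded_invariant_no_real_point:
  fixes a x :: real and L :: "'a::real_normed_algebra_1 set"
  assumes inv: "\<And>z. z \<in> L \<Longrightarrow> z^2 + of_real a \<in> L"
    and "bounded L" and "a > 1/4"
  shows "of_real x \<notin> L"
proof
  assume x: "of_real x \<in> L"
  define y where "y n = ((\<lambda>t. t^2 + a) ^^ n) x" for n
  have orbit: "of_real (y n) \<in> L" for n
    by (induction n) (use x inv in \<open>auto simp: y_def\<close>)
  obtain B where B: "\<And>z. z \<in> L \<Longrightarrow> norm z \<le> B"
    using \<open>bounded L\<close> by (auto simp: bounded_iff)
  obtain n where "real n > (B - x) / (a - 1/4)"
    using reals_Archimedean2 by blast
  then have "x + real n * (a - 1/4) > B"
    using \<open>a > 1/4\<close> by (simp add: pos_divide_less_eq algebra_simps)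
  moreover have "y n \<le> B"
    using B[OF orbit[of n]] by simp
  ultimately show False
    using real_quadratic_iterate_ge[of x n a] by (simp add: y_def)
qed

lemma compact_invariant_avoids_cball_half:
  fixes c r :: real
  assumes "c \<le> 1/4" "1/4 - c < r" "compact L" "forward_invariant (Gsemi c r) L" "1/2 \<notin> L"
  shows "L \<inter> cball 0 (1/2) = {}"
proof (rule ccontr)
  assume "L \<inter> cball 0 (1/2) \<noteq> {}"
  then obtain z0 where z0: "z0 \<in> L" "cmod z0 \<le> 1/2" by auto
  have inv: "\<And>z c'. z \<in> L \<Longrightarrow> cmod (c' - of_real c) \<le> r \<Longrightarrow> z^2 + c' \<in> L"
    using assms(4) by (simp add: forward_invariant_Gsemi_iff)
  define \<psi> where "\<psi> w = Re (inverse (1/2 - w))" for w :: complex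
  have "continuous_on L \<psi>"
    unfolding \<psi>_def by (intro continuous_intros) (metis assms(5) right_minus_eq)
  then obtain z where z: "z \<in> L" and z_max: "\<And>w. w \<in> L \<Longrightarrow> \<psi> w \<le> \<psi> z"
    using continuous_attains_sup[OF assms(3)] z0(1) by blast
  have "z0 \<noteq> 1/2"
    using z0(1) assms(5) by blast
  then have "1 \<le> \<psi> z0"
    using dist_tangent_disk_iff_Re_inverse(1)[of z0 "1/2" "1/2"] z0(2) by (simp add: \<psi>_def)
  then have "1 \<le> \<psi> z"
    using z_max z0(1) by force
  \<comment> \<open>The superlevel set of \<open>\<psi>\<close> at \<open>z\<close> is the disk of radius \<open>\<rho>\<close> tangent at \<open>1/2\<close>, with \<open>z\<close> on its boundary.\<close>
  define \<rho> where "\<rho> = 1 / (2 * \<psi> z)"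
  have \<rho>: "0 < \<rho>" "\<rho> \<le> 1/2" and \<rho>_\<psi>: "2 * \<rho> * \<psi> z = 1"
    using \<open>1 \<le> \<psi> z\<close> by (auto simp: \<rho>_def field_simps)
  have "z \<noteq> 1/2" using z assms(5) by blast
  note tangent_z = dist_tangent_disk_iff_Re_inverse[OF this less_imp_le[OF \<rho>(1)], folded \<psi>_def]
  have "z \<in> sphere (of_real (1/2 - \<rho>)) \<rho>"
    using tangent_z \<rho>_\<psi> by (simp add: dist_commute)
  then obtain c' where c': "cmod (c' - of_real c) \<le> r" "dist (z^2 + c') (of_real (1/2 - \<rho>)) < \<rho>"
    using perturbed_square_enters_tangent_disk assms(1,2) \<rho> by blast
  define w where "w = z^2 + c'"
  have "w \<in> L"
    using inv[OF z c'(1)] by (simp add: w_def)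
  then have "w \<noteq> 1/2"
    using assms(5) by blast
  have "1 < 2 * \<rho> * \<psi> w"
    using dist_tangent_disk_iff_Re_inverse(2)[OF \<open>w \<noteq> 1/2\<close> less_imp_le[OF \<rho>(1)], folded \<psi>_def] c'(2)
    by (simp add: w_def)
  then have "\<psi> z < \<psi> w"
    using \<rho> \<rho>_\<psi> by (smt (verit) mult_left_mono)
  with z_max[OF \<open>w \<in> L\<close>] show False by simp
qed

lemma invariant_cball_grows:
  assumes inv: "forward_invariant (Gsemi c r) L" and avoid: "L \<inter> cball 0 (1/2) = {}"
    and ball: "cball p \<rho> \<subseteq> L" and "0 \<le> \<rho>" "0 \<le> r"
  shows "cball (p^2 + c) (\<rho> + r) \<subseteq> L"
proof
  fix s assume "s \<in> cball (p^2 + c) (\<rho> + r)"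
  then have "cball s r \<inter> cball (p^2 + c) \<rho> \<noteq> {}"
    using assms(4,5) by (intro cball_Int_cball_nonempty) (auto simp: dist_commute add.commute)
  then obtain q where q: "dist s q \<le> r" "dist (p^2 + c) q \<le> \<rho>"
    by auto
  have "cball p \<rho> \<inter> cball 0 (1/2) = {}"
    using ball avoid by blast
  then have "\<rho> + 1/2 < cmod p"
    using cball_Int_cball_nonempty[of p 0 \<rho> "1/2"] assms(4) by fastforce
  then have "\<rho> * 1 \<le> \<rho> * (2 * cmod p - \<rho>)"
    using assms(4) by (intro mult_left_mono) auto
  then have "q - c \<in> cball (p^2) (\<rho> * (2 * cmod p - \<rho>))"
    using q(2) by (simp add: dist_norm algebra_simps)
  then obtain z where z: "z \<in> cball p \<rho>" "q - c = z^2"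
    using cball_square_subset[OF assms(4)] by blast
  have "s = z^2 + (c + (s - q))"
    using z(2) by (simp add: algebra_simps)
  moreover have "cmod ((c + (s - q)) - c) \<le> r"
    using q(1) by (simp add: dist_norm)
  moreover have "z \<in> L"
    using z(1) ball by blast
  ultimately show "s \<in> L"
    using inv unfolding forward_invariant_Gsemi_iff by metis
qed

lemma compact_invariant_empty:
  fixes c r :: real
  assumes "c \<le> 1/4" "1/4 - c < r" "compact L" "forward_invariant (Gsemi c r) L"
  shows "L = {}"
proof (rule ccontr)
  assume "L \<noteq> {}"
  have r: "0 < r"
    using assms(1,2) by linarith
  have "bounded L"
    using assms(3) by (rule compact_imp_bounded)
  have "\<And>z. z \<in> L \<Longrightarrow> z^2 + of_real (c + r) \<in> L"
    using assms(4) r by (simp add: forward_invariant_Gsemi_iff)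
  then have "of_real (1/2) \<notin> L"
    using bounded_invariant_no_real_point \<open>bounded L\<close> assms(2) by (metis add.commute diff_less_eq)
  then have avoid: "L \<inter> cball 0 (1/2) = {}"
    using compact_invariant_avoids_cball_half assms by simp
  have "\<exists>p. cball p (real n * r) \<subseteq> L" for n
  proof (induction n)
    case 0
    then show ?case
      using \<open>L \<noteq> {}\<close> by auto
  next
    case (Suc n)
    then obtain p where "cball p (real n * r) \<subseteq> L" by blast
    then have "cball (p^2 + of_real c) (real n * r + r) \<subseteq> L"
      using invariant_cball_grows assms(4) avoid r by simp
    then show ?case
      by (auto simp: algebra_simps)
  qed
  moreover obtain n where "diameter L < real n * r"
    using reals_Archimedean3[OF r] by blast
  ultimately obtain p where "cball p (real n * r) \<subseteq> L" "diameter L < real n * r"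
    by blast
  then have "2 * (real n * r) \<le> diameter L"
    using diameter_subset[OF _ \<open>bounded L\<close>, of "cball p (real n * r)"] r by (simp add: mult_less_0_iff)
  with \<open>diameter L < real n * r\<close> diameter_ge_0[OF \<open>bounded L\<close>] show False
    by linarith
qed

theorem theorem4p12:
  fixes c :: real
  assumes "0 \<le> c" and "c \<le> 1/4"
  shows "r_bif (complex_of_real c) = 1/4 - c"
proof -
  define S where "S = {r. r \<ge> 0 \<and> (\<exists>L. planar_minimal_set (Gsemi (complex_of_real c) r) L)}"
  have "forward_invariant (Gsemi (complex_of_real c) (1/4 - c)) (cball 0 (1/2))"
    using assms(1) by (intro cball_half_forward_invariant) simp
  then have "1/4 - c \<in> S"
    using planar_minimal_set_exists[of "cball 0 (1/2)"] assms(2) by (simp add: S_def)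
  moreover have "r \<le> 1/4 - c" if r: "r \<in> S" for r
  proof (rule ccontr)
    assume "\<not> r \<le> 1/4 - c"
    then have "1/4 - c < r" by simp
    obtain L where "planar_minimal_set (Gsemi (complex_of_real c) r) L"
      using r by (auto simp: S_def)
    then show False
      using compact_invariant_empty[OF assms(2) \<open>1/4 - c < r\<close>] unfolding planar_minimal_set_def by blast
  qed
  ultimately have "Sup S = 1/4 - c"
    by (intro cSup_eq_maximum) auto
  then show ?thesis
    by (simp add: r_bif_def S_def)
qed

end
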